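(* Let $n$ be large, let $k$ be an integer with $1\le k\le 0.5\log n$, let $d=2\log 2n$, $\xi=e^{1/3}\cdot 2\log 2n$, and $\alpha_i=\prod_{j=1}^{i}\bigl(1+\tfrac{1}{k-j}\bigr)$ for $0\le i\le k-1$ (so $\alpha_0=1$). Consider the clustering sequence described in the context. For every $1\le i\le k-1$, if $|\mathcal{C}_{i-1}|\le \xi\,\alpha_{i-1}\,n^{1-(i-1)/k}$, then $\Pr\bigl[|\mathcal{C}_i|\ge \xi\,\alpha_i\,n^{1-i/k}\bigr]<0.5$. Moreover, $\xi\,\alpha_{k-1}\,n^{1/k}=O(k n^{1/k}\log n)$.
   Context: Logarithms are base 2. There is a graph on $n$ nodes and a sequence of clusterings $\mathcal{C}_0,\mathcal{C}_1,\dots$, where each clustering is a set of disjoint sets (clusters) of nodes, $\mathcal{C}_0=\{\{v\}: v\in V\}$, and for $1\le i\le k-1$ the clustering $\mathcal{C}_i$ is obtained from $\mathcal{C}_{i-1}$ by including each cluster $C\in\mathcal{C}_{i-1}$ in $\mathcal{C}_i$ with probability $n^{-1/k}$, where the inclusion events of the clusters of $\mathcal{C}_{i-1}$ are $d$-wise independent (any $d$ of them are mutually independent), conditioned on $\mathcal{C}_{i-1}$. *)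

theory Defs
  imports "HOL-Probability.Probability"
begin

definition sample_prob :: "nat \<Rightarrow> nat \<Rightarrow> real" where
  "sample_prob n k = real n powr (- 1 / real k)"

definition indep_deg :: "nat \<Rightarrow> real" where
  "indep_deg n = 2 * log 2 (2 * real n)"

definition xi :: "nat \<Rightarrow> real" where
  "xi n = exp (1/3) * (2 * log 2 (2 * real n))"

definition alpha :: "nat \<Rightarrow> nat \<Rightarrow> real" where
  "alpha k i = (\<Prod>j\<in>{1..i}. 1 + 1 / (real k - real j))"

text \<open>One sampling step: from the clustering A (a set of disjoint clusters of nodes
  of the n-node graph) the next clustering is drawn from P, a distribution on subsets
  of A, in which each cluster is kept with probability p and any at most d of the
  inclusion events are mutually independent.\<close>

definition sampling_step ::
  "nat \<Rightarrow> real \<Rightarrow> real \<Rightarrow> nat set set \<Rightarrow> nat set set pmf \<Rightarrow> bool" where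
  "sampling_step n p d A P \<longleftrightarrow>
     A \<subseteq> Pow {..<n} \<and> disjoint A \<and> set_pmf P \<subseteq> Pow A \<and>
     (\<forall>c\<in>A. measure_pmf.prob P {S. c \<in> S} = p) \<and>
     (\<forall>B\<subseteq>A. real (card B) \<le> d \<longrightarrow>
        prob_space.indep_events (measure_pmf P) (\<lambda>c. {S. c \<in> S}) B)"

end

theory Submission
  imports Defs
begin

text \<open>Only pairwise independence of the inclusion events is used. With \<open>r = k - i\<close> and
  \<open>M = \<xi> \<alpha>\<^sub>i\<^sub>-\<^sub>1 n\<^sup>r\<^sup>/\<^sup>k \<ge> |\<C>\<^sub>i\<^sub>-\<^sub>1| p\<close>, the number of kept clusters has mean at most \<open>M\<close> and variance at most
  its mean, while \<open>\<alpha>\<^sub>i / \<alpha>\<^sub>i\<^sub>-\<^sub>1 = 1 + 1/r\<close> puts the threshold \<open>M/r\<close> above \<open>M\<close>; Chebyshev's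
  inequality bounds the probability by \<open>r\<^sup>2 / M\<close>. Since \<open>n \<ge> 4\<^sup>k\<close>, \<open>M \<ge> 2 n\<^sup>r\<^sup>/\<^sup>k \<ge> 2\<cdot>4\<^sup>r > 2 r\<^sup>2\<close>,
  so this is below \<open>1/2\<close>. The product \<open>\<alpha>\<^sub>j\<close> telescopes to \<open>k/(k - j)\<close>, so \<open>\<alpha>\<^sub>k\<^sub>-\<^sub>1 = k\<close>,
  which gives the size bound.\<close>

locale pairwise_indep_subset =
  fixes A :: "'a set" and P :: "'a set pmf" and p :: real
  assumes finite_A: "finite A"
    and set_pmf_subset: "set_pmf P \<subseteq> Pow A"
    and prob_mem: "c \<in> A \<Longrightarrow> measure_pmf.prob P {S. c \<in> S} = p"
    and prob_mem_pair:
      "c \<in> A \<Longrightarrow> c' \<in> A \<Longrightarrow> c \<noteq> c' \<Longrightarrow> measure_pmf.prob P {S. c \<in> S \<and> c' \<in> S} = p * p"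
begin

lemma integrable_P [simp]: "integrable (measure_pmf P) (f :: 'a set \<Rightarrow> real)"
  using finite_A set_pmf_subset
  by (intro integrable_measure_pmf_finite) (auto intro: finite_subset)

lemma card_eq_sum_mem: "S \<in> set_pmf P \<Longrightarrow> real (card S) = (\<Sum>c\<in>A. of_bool (c \<in> S))"
proof -
  assume "S \<in> set_pmf P"
  then have "A \<inter> S = S"
    using set_pmf_subset by auto
  then show ?thesis
    using finite_A by simp
qed

lemma expectation_mem_pair:
  assumes "c \<in> A" "c' \<in> A"
  shows "measure_pmf.expectation P (\<lambda>S. of_bool (c \<in> S) * of_bool (c' \<in> S))
           = (if c = c' then p else p * p)"
proof -
  have "(\<lambda>S. of_bool (c \<in> S) * of_bool (c' \<in> S) :: real) = indicator {S. c \<in> S \<and> c' \<in> S}"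
    by (auto simp: fun_eq_iff indicator_def)
  then show ?thesis
    using assms prob_mem prob_mem_pair by (cases "c = c'") simp_all
qed

lemma expectation_mem: "c \<in> A \<Longrightarrow> measure_pmf.expectation P (\<lambda>S. of_bool (c \<in> S)) = p"
  using expectation_mem_pair[of c c] by (simp add: of_bool_conj[symmetric])

lemma expectation_card: "measure_pmf.expectation P (\<lambda>S. real (card S)) = real (card A) * p"
proof -
  have "measure_pmf.expectation P (\<lambda>S. real (card S))
          = measure_pmf.expectation P (\<lambda>S. \<Sum>c\<in>A. of_bool (c \<in> S))"
    by (intro integral_cong_AE) (auto simp: AE_measure_pmf_iff card_eq_sum_mem)
  also have "\<dots> = (\<Sum>c\<in>A. p)"
    by (simp add: expectation_mem)
  finally show ?thesis by simp
qed

lemma variance_card: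
  "measure_pmf.variance P (\<lambda>S. real (card S)) = real (card A) * (p - p * p)"
proof -
  let ?Y = "\<lambda>c S. of_bool (c \<in> S) - p :: real"
  have "measure_pmf.variance P (\<lambda>S. real (card S))
          = measure_pmf.expectation P (\<lambda>S. \<Sum>c\<in>A. \<Sum>c'\<in>A. ?Y c S * ?Y c' S)"
  proof (intro integral_cong_AE)
    show "AE S in measure_pmf P. (real (card S) - measure_pmf.expectation P (\<lambda>S. real (card S)))\<^sup>2
            = (\<Sum>c\<in>A. \<Sum>c'\<in>A. ?Y c S * ?Y c' S)"
    proof (rule AE_pmfI)
      fix S assume "S \<in> set_pmf P"
      then have "real (card S) - measure_pmf.expectation P (\<lambda>S. real (card S)) = (\<Sum>c\<in>A. ?Y c S)"
        by (simp add: card_eq_sum_mem expectation_card sum_subtractf)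
      then show "(real (card S) - measure_pmf.expectation P (\<lambda>S. real (card S)))\<^sup>2
                   = (\<Sum>c\<in>A. \<Sum>c'\<in>A. ?Y c S * ?Y c' S)"
        by (simp add: power2_eq_square sum_product)
    qed
  qed auto
  also have "\<dots> = (\<Sum>c\<in>A. \<Sum>c'\<in>A. measure_pmf.expectation P (\<lambda>S. ?Y c S * ?Y c' S))"
    by simp
  also have "\<dots> = (\<Sum>c\<in>A. \<Sum>c'\<in>A. if c = c' then p - p * p else 0)"
  proof (intro sum.cong refl)
    fix c c' assume "c \<in> A" "c' \<in> A"
    have "(\<lambda>S. ?Y c S * ?Y c' S)
            = (\<lambda>S. of_bool (c \<in> S) * of_bool (c' \<in> S) - p * of_bool (c \<in> S) - p * of_bool (c' \<in> S) + p * p)"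
      by (auto simp: fun_eq_iff algebra_simps)
    then show "measure_pmf.expectation P (\<lambda>S. ?Y c S * ?Y c' S) = (if c = c' then p - p * p else 0)"
      using \<open>c \<in> A\<close> \<open>c' \<in> A\<close> by (simp add: expectation_mem expectation_mem_pair)
  qed
  also have "\<dots> = real (card A) * (p - p * p)"
    using finite_A by simp
  finally show ?thesis .
qed

lemma prob_card_ge_le:
  assumes "0 \<le> p" "real (card A) * p \<le> M" "0 < t"
  shows "measure_pmf.prob P {S. M + t \<le> real (card S)} \<le> M / t\<^sup>2"
proof -
  let ?X = "\<lambda>S. real (card S)"
  have "measure_pmf.prob P {S. M + t \<le> ?X S}
          \<le> measure_pmf.prob P {S \<in> space (measure_pmf P). t \<le> \<bar>?X S - measure_pmf.expectation P ?X\<bar>}"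
    using assms(2) by (intro measure_pmf.finite_measure_mono) (auto simp: expectation_card)
  also have "\<dots> \<le> measure_pmf.variance P ?X / t\<^sup>2"
    using assms(3) by (intro measure_pmf.Chebyshev_inequality) auto
  also have "\<dots> \<le> M / t\<^sup>2"
  proof (intro divide_right_mono)
    have "real (card A) * (p - p * p) \<le> real (card A) * p"
      by (intro mult_left_mono) auto
    then show "measure_pmf.variance P ?X \<le> M"
      using assms(2) by (simp add: variance_card)
  qed simp
  finally show ?thesis .
qed

end

lemma sampling_step_pairwise_indep_subset:
  assumes step: "sampling_step n p d A P" and "2 \<le> d"
  shows "pairwise_indep_subset A P p"
proof
  show "finite A"
    using step by (auto simp: sampling_step_def intro: finite_subset[of A "Pow {..<n}"])
  show "set_pmf P \<subseteq> Pow A" "\<And>c. c \<in> A \<Longrightarrow> measure_pmf.prob P {S. c \<in> S} = p"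
    using step by (simp_all add: sampling_step_def)
  fix c c' assume cc: "c \<in> A" "c' \<in> A" "c \<noteq> c'"
  then have "prob_space.indep_events (measure_pmf P) (\<lambda>c. {S. c \<in> S}) {c, c'}"
    using step \<open>2 \<le> d\<close> by (simp add: sampling_step_def)
  then have "measure_pmf.prob P (\<Inter>j\<in>{c, c'}. {S. j \<in> S})
               = (\<Prod>j\<in>{c, c'}. measure_pmf.prob P {S. j \<in> S})"
    unfolding prob_space.indep_events_def[OF prob_space_measure_pmf] by blast
  moreover have "(\<Inter>j\<in>{c, c'}. {S. j \<in> S}) = {S. c \<in> S \<and> c' \<in> S}"
    by auto
  ultimately show "measure_pmf.prob P {S. c \<in> S \<and> c' \<in> S} = p * p"
    using cc step by (simp add: sampling_step_def)
qed

lemma alpha_Suc: "alpha k (Suc j) = alpha k j * (1 + 1 / (real k - real (Suc j)))"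
  by (simp add: alpha_def prod.nat_ivl_Suc')

lemma alpha_eq: "j < k \<Longrightarrow> alpha k j = real k / (real k - real j)"
proof (induction j)
  case 0
  then show ?case by (simp add: alpha_def)
next
  case (Suc j)
  then have "real k - real (Suc j) > 0" by simp
  then show ?case
    using Suc by (simp add: alpha_Suc field_simps)
qed

lemma xi_ge_two: "1 \<le> n \<Longrightarrow> 2 \<le> xi n"
proof -
  assume "1 \<le> n"
  then have "1 \<le> log 2 (2 * real n)" by simp
  moreover have "1 \<le> exp (1/3 :: real)" by simp
  ultimately show ?thesis
    unfolding xi_def using mult_mono[of 1 "exp (1/3)" 2 "2 * log 2 (2 * real n)"] by simp
qed

lemma four_powr_le_powr:
  assumes "0 < k" "real k \<le> 0.5 * log 2 (real n)" "0 \<le> r"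
  shows "4 powr r \<le> real n powr (r / real k)"
proof -
  have "0 < real n"
    using assms by (cases "n = 0") (auto simp: log_def)
  have "4 powr real k = 2 powr (2 * real k)"
    by (simp add: powr_powr[symmetric])
  also have "\<dots> \<le> 2 powr log 2 (real n)"
    using assms(2) by (intro powr_mono) auto
  also have "\<dots> = real n"
    using \<open>0 < real n\<close> by simp
  finally have "(4 powr real k) powr (r / real k) \<le> real n powr (r / real k)"
    using assms by (intro powr_mono2) auto
  then show ?thesis
    using assms(1) by (simp add: powr_powr)
qed

lemma real_sq_less_four_power: "real r ^ 2 < 4 ^ r"
proof -
  have "real r < 2 ^ r"
    using less_exp[of r] by (metis of_nat_less_iff of_nat_numeral of_nat_power)
  then have "real r ^ 2 < (2 ^ r) ^ 2"
    by (intro power_strict_mono) auto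
  then show ?thesis
    by (simp add: power_mult[symmetric] mult.commute[of r] power_mult)
qed

lemma two_sq_less_xi_alpha_powr:
  assumes kn: "real k \<le> 0.5 * log 2 (real n)" and "1 \<le> i" "i < k"
  shows "2 * (real k - real i)\<^sup>2 < xi n * alpha k (i - 1) * real n powr ((real k - real i) / real k)"
proof -
  let ?r = "real k - real i"
  have "0 < k" "0 \<le> ?r"
    using \<open>i < k\<close> by auto
  then have "1 \<le> n"
    using kn by (cases n) (auto simp: log_def)
  have r_eq: "?r = real (k - i)"
    using \<open>i < k\<close> by simp
  have "?r\<^sup>2 < 4 powr ?r"
    unfolding r_eq using real_sq_less_four_power[of "k - i"] by (simp add: powr_realpow)
  also have "\<dots> \<le> real n powr (?r / real k)"
    by (rule four_powr_le_powr[OF \<open>0 < k\<close> kn \<open>0 \<le> ?r\<close>])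
  finally have "2 * ?r\<^sup>2 < 2 * real n powr (?r / real k)"
    by simp
  also have "\<dots> \<le> xi n * alpha k (i - 1) * real n powr (?r / real k)"
  proof -
    have "1 \<le> alpha k (i - 1)"
      using alpha_eq[of "i - 1" k] \<open>i < k\<close> by simp
    then have "2 * 1 \<le> xi n * alpha k (i - 1)"
      using xi_ge_two[OF \<open>1 \<le> n\<close>] by (intro mult_mono) auto
    then show ?thesis
      by (intro mult_right_mono) auto
  qed
  finally show ?thesis .
qed

lemma prob_clustering_size_ge_less_half:
  fixes n k i :: nat and A :: "nat set set" and P :: "nat set set pmf"
  assumes "1 \<le> k" and kn: "real k \<le> 0.5 * log 2 (real n)" and "1 \<le> i" "i \<le> k - 1"
    and step: "sampling_step n (sample_prob n k) (indep_deg n) A P"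
    and card_A: "real (card A) \<le> xi n * alpha k (i - 1) * real n powr (1 - real (i - 1) / real k)"
  shows "measure_pmf.prob P
           {S. real (card S) \<ge> xi n * alpha k i * real n powr (1 - real i / real k)} < 0.5"
proof -
  define p where "p = sample_prob n k"
  define r where "r = real k - real i"
  define M where "M = xi n * alpha k (i - 1) * real n powr (r / real k)"
  have "1 \<le> r" "0 < real k" "i < k"
    using assms by (auto simp: r_def)
  have "1 \<le> n"
    using kn \<open>1 \<le> k\<close> by (cases n) (auto simp: log_def)
  interpret pairwise_indep_subset A P p
    using step \<open>1 \<le> n\<close> by (intro sampling_step_pairwise_indep_subset[of n _ "indep_deg n"])
      (auto simp: p_def indep_deg_def)
  have alpha_i: "alpha k i = alpha k (i - 1) * (1 + 1 / r)"
    using alpha_Suc[of k "i - 1"] \<open>1 \<le> i\<close> by (simp add: r_def)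
  have exponent: "1 - real (i - 1) / real k + - 1 / real k = r / real k"
    using \<open>1 \<le> i\<close> \<open>0 < real k\<close> by (simp add: r_def field_simps)
  have "real n powr (1 - real (i - 1) / real k) * p = real n powr (r / real k)"
    unfolding p_def sample_prob_def powr_add[symmetric] exponent ..
  moreover have "real (card A) * p \<le> xi n * alpha k (i - 1) * real n powr (1 - real (i - 1) / real k) * p"
    by (rule mult_right_mono[OF card_A]) (simp add: p_def sample_prob_def)
  ultimately have mean: "real (card A) * p \<le> M"
    by (simp only: M_def mult.assoc)
  have threshold: "xi n * alpha k i * real n powr (1 - real i / real k) = M + M / r"
    using \<open>0 < real k\<close> \<open>1 \<le> r\<close>
    by (simp add: M_def alpha_i r_def diff_divide_distrib algebra_simps)
  have "2 * r\<^sup>2 < M"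
    using two_sq_less_xi_alpha_powr[OF kn \<open>1 \<le> i\<close> \<open>i < k\<close>] by (simp add: M_def r_def)
  then have "0 < M"
    using zero_le_power2[of r] by linarith
  have "measure_pmf.prob P {S. M + M / r \<le> real (card S)} \<le> M / (M / r)\<^sup>2"
    using \<open>0 < M\<close> \<open>1 \<le> r\<close> mean by (intro prob_card_ge_le) (auto simp: p_def sample_prob_def)
  also have "\<dots> = r\<^sup>2 / M"
    using \<open>0 < M\<close> \<open>1 \<le> r\<close> by (simp add: field_simps power2_eq_square)
  also have "\<dots> < 0.5"
    using \<open>2 * r\<^sup>2 < M\<close> \<open>0 < M\<close> by (simp add: field_simps)
  finally show ?thesis
    by (simp add: threshold)
qed

lemma xi_alpha_last_le:
  assumes "2 \<le> n" "1 \<le> k"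
  shows "xi n * alpha k (k - 1) * real n powr (1 / real k)
           \<le> (4 * exp (1/3)) * (real k * real n powr (1 / real k) * log 2 (real n))"
proof -
  have "1 \<le> log 2 (real n)" "log 2 (2 * real n) = 1 + log 2 (real n)"
    using assms by (simp_all add: log_mult)
  then have "xi n \<le> 4 * exp (1/3) * log 2 (real n)"
    by (simp add: xi_def)
  then show ?thesis
    using alpha_eq[of "k - 1" k] assms
    by (simp add: mult_right_mono algebra_simps)
qed

theorem lemma8:
  shows "(\<exists>n0::nat. \<forall>n\<ge>n0. \<forall>k::nat. \<forall>i::nat. \<forall>A::nat set set. \<forall>P::nat set set pmf.
            1 \<le> k \<and> real k \<le> 0.5 * log 2 (real n) \<and> 1 \<le> i \<and> i \<le> k - 1 \<and>
            sampling_step n (sample_prob n k) (indep_deg n) A P \<and>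
            real (card A) \<le> xi n * alpha k (i - 1) * real n powr (1 - real (i - 1) / real k)
            \<longrightarrow> measure_pmf.prob P
                  {S. real (card S) \<ge> xi n * alpha k i * real n powr (1 - real i / real k)} < 0.5)
       \<and> (\<exists>C::real. \<exists>n0::nat. \<forall>n\<ge>n0. \<forall>k::nat.
            1 \<le> k \<and> real k \<le> 0.5 * log 2 (real n) \<longrightarrow>
            xi n * alpha k (k - 1) * real n powr (1 / real k)
              \<le> C * (real k * real n powr (1 / real k) * log 2 (real n)))"
  using prob_clustering_size_ge_less_half xi_alpha_last_le by blast

end
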